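(* Let $X$ be a shift space over $\mathcal{A}$, $\sigma:\mathcal{A}^*\to\mathcal{B}^*$ an injective and strongly left proper morphism with first letter $\ell$, $Y$ the image of $X$ under $\sigma$ and $v\in\mathcal{L}(X)$. A word $u$ is a bispecial extended image of $v$ if and only if there exist $(a_1,b_1),(a_2,b_2)\in E_X(v)$ with $a_1\ne a_2$, $b_1\ne b_2$ and $u=s(a_1,a_2)\,\sigma(v)\,p(b_1,b_2)$. In particular, the antecedent $v$ of a bispecial word $u\in\mathcal{L}(Y)$ is bispecial in $X$.
   Context: A shift space over a finite alphabet $\mathcal{A}$ is a closed shift-invariant $X\subseteq\mathcal{A}^{\mathbb{Z}}$ in which all letters occur; $\mathcal{L}(X)$ is its set of finite factors. For $w\in\mathcal{L}(X)$: $E^-_X(w)=\{a: aw\in\mathcal{L}(X)\}$, $E^+_X(w)=\{b:wb\in\mathcal{L}(X)\}$, $E_X(w)=\{(a,b):awb\in\mathcal{L}(X)\}$; $w$ is bispecial if $\#E^-_X(w)\ge2$ and $\#E^+_X(w)\ge2$. Morphisms are non-erasing; $\sigma$ is strongly left proper with first letter $\ell$ if every $\sigma(a)$ starts with $\ell$ and contains exactly one occurrence of $\ell$. The image of $X$ under $\sigma$ is $Y=\{S^k\sigma(x):x\in X,0\le k<|\sigma(x_0)|\}$. For $a_1,a_2\in\mathcal{A}$, $s(a_1,a_2)$ (resp. $p(a_1,a_2)$) is the longest common suffix (resp. prefix) of $\sigma(a_1)$ and $\sigma(a_2)$. Fact (antecedents): for every non-empty $u\in\mathcal{L}(Y)$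 containing $\ell$ there is a unique triple $(s,v,p)$ with $v\in\mathcal{L}(X)$, $u=s\sigma(v)p$, such that for some $(a,b)\in E_X(v)$, $s$ is a proper suffix of $\sigma(a)$ and $p$ is a non-empty prefix of $\sigma(b)$. Then $v$ is called the antecedent of $u$ and $u$ an extended image of $v$ (extended images always contain $\ell$). *)

theory Defs
  imports Main "HOL-Library.Sublist"
begin

text \<open>Bi-infinite sequences over an alphabet are functions int => 'a.
  The finite alphabet A is the finite type 'a.\<close>

definition shift :: "(int \<Rightarrow> 'a) \<Rightarrow> (int \<Rightarrow> 'a)" where
  "shift x = (\<lambda>i. x (i + 1))"

definition factor :: "(int \<Rightarrow> 'a) \<Rightarrow> int \<Rightarrow> nat \<Rightarrow> 'a list" where
  "factor x i n = map (\<lambda>k. x (i + int k)) [0..<n]"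

definition lang :: "(int \<Rightarrow> 'a) set \<Rightarrow> 'a list set" where
  "lang X = {w. \<exists>x\<in>X. \<exists>i n. w = factor x i n}"

text \<open>Closedness in the product topology of the discrete alphabet: a sequence
  all of whose factors are factors of X belongs to X.\<close>
definition shift_space :: "(int \<Rightarrow> 'a::finite) set \<Rightarrow> bool" where
  "shift_space X \<longleftrightarrow>
     (\<forall>x. (\<forall>i n. factor x i n \<in> lang X) \<longrightarrow> x \<in> X) \<and>
     shift ` X = X \<and>
     (\<forall>a. \<exists>x\<in>X. \<exists>i. x i = a)"

definition ext_left :: "(int \<Rightarrow> 'a) set \<Rightarrow> 'a list \<Rightarrow> 'a set" where
  "ext_left X w = {a. a # w \<in> lang X}"

definition ext_right :: "(int \<Rightarrow> 'a) set \<Rightarrow> 'a list \<Rightarrow> 'a set" where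
  "ext_right X w = {b. w @ [b] \<in> lang X}"

definition ext_both :: "(int \<Rightarrow> 'a) set \<Rightarrow> 'a list \<Rightarrow> ('a \<times> 'a) set" where
  "ext_both X w = {(a, b). a # w @ [b] \<in> lang X}"

definition bispecial :: "(int \<Rightarrow> 'a) set \<Rightarrow> 'a list \<Rightarrow> bool" where
  "bispecial X w \<longleftrightarrow> w \<in> lang X \<and> 2 \<le> card (ext_left X w) \<and> 2 \<le> card (ext_right X w)"

definition morph :: "('a \<Rightarrow> 'b list) \<Rightarrow> 'a list \<Rightarrow> 'b list" where
  "morph \<sigma> w = concat (map \<sigma> w)"

definition strongly_left_proper :: "('a \<Rightarrow> 'b list) \<Rightarrow> 'b \<Rightarrow> bool" where
  "strongly_left_proper \<sigma> l \<longleftrightarrow>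
     (\<forall>a. \<sigma> a \<noteq> [] \<and> hd (\<sigma> a) = l \<and> count_list (\<sigma> a) l = 1)"

text \<open>Image of X under sigma: all S^k sigma(x), x in X, 0 <= k < |sigma(x_0)|.
  The cut points c n mark where sigma(x_n) starts inside S^k sigma(x); c 0 = -k.\<close>
definition image_shift :: "('a \<Rightarrow> 'b list) \<Rightarrow> (int \<Rightarrow> 'a) set \<Rightarrow> (int \<Rightarrow> 'b) set" where
  "image_shift \<sigma> X = {y. \<exists>x\<in>X. \<exists>c :: int \<Rightarrow> int.
      - int (length (\<sigma> (x 0))) < c 0 \<and> c 0 \<le> 0 \<and>
      (\<forall>n. c (n + 1) = c n + int (length (\<sigma> (x n)))) \<and>
      (\<forall>n j. j < length (\<sigma> (x n)) \<longrightarrow> y (c n + int j) = \<sigma> (x n) ! j)}"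

fun lcp :: "'a list \<Rightarrow> 'a list \<Rightarrow> 'a list" where
  "lcp (x # xs) (y # ys) = (if x = y then x # lcp xs ys else [])"
| "lcp _ _ = []"

definition lcs :: "'a list \<Rightarrow> 'a list \<Rightarrow> 'a list" where
  "lcs xs ys = rev (lcp (rev xs) (rev ys))"

definition sfx :: "('a \<Rightarrow> 'b list) \<Rightarrow> 'a \<Rightarrow> 'a \<Rightarrow> 'b list" where
  "sfx \<sigma> a1 a2 = lcs (\<sigma> a1) (\<sigma> a2)"

definition pfx :: "('a \<Rightarrow> 'b list) \<Rightarrow> 'a \<Rightarrow> 'a \<Rightarrow> 'b list" where
  "pfx \<sigma> a1 a2 = lcp (\<sigma> a1) (\<sigma> a2)"

definition extended_image ::
  "('a \<Rightarrow> 'b list) \<Rightarrow> (int \<Rightarrow> 'a) set \<Rightarrow> 'b list \<Rightarrow> 'a list \<Rightarrow> bool" where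
  "extended_image \<sigma> X u v \<longleftrightarrow> v \<in> lang X \<and>
     (\<exists>s p a b. (a, b) \<in> ext_both X v \<and> strict_suffix s (\<sigma> a) \<and>
        p \<noteq> [] \<and> prefix p (\<sigma> b) \<and> u = s @ morph \<sigma> v @ p)"

end

theory Submission
  imports Defs
begin

(* Since l occurs in each sigma a exactly once, as its first letter, the occurrences of l in
   sigma w mark exactly the boundaries of the blocks sigma (w ! i).  Hence an occurrence of
   u = s sigma(v) p inside sigma w, with s a proper suffix and p a nonempty prefix of images of
   letters and with a letter of sigma w to its left, is synchronized with the blocks: w factors as
   w1 a v b w2 with sigma a ending in s and sigma b beginning with p.  So the left extensions of u
   in L(Y) are the letters preceding s in sigma a, and its right extensions are the letters
   following p in sigma b (or l, the first letter of the next block), for (a, b) ranging over the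
   pairs of E_X(v) compatible with s and p.  Thus u is bispecial iff two such pairs differ in both
   letters, and for such pairs s and p are the longest common suffix s(a1, a2) and prefix
   p(b1, b2).  Conversely, for (a1, b1), (a2, b2) in E_X(v) with a1 ~= a2 and b1 ~= b2, injectivity
   and properness make s(a1, a2) a proper suffix and p(b1, b2) a nonempty prefix whose
   neighbouring letters differ. *)

section \<open>Words\<close>

lemma append_Cons_eq_append_Cons_iff:
  "x \<notin> set xs \<Longrightarrow> x \<notin> set xs' \<Longrightarrow> xs @ x # ys = xs' @ x # ys' \<longleftrightarrow> xs = xs' \<and> ys = ys'"
proof (induction xs arbitrary: xs')
  case Nil
  then show ?case by (cases xs') auto
next
  case (Cons a xs)
  then show ?case by (cases xs') auto
qed

lemma strict_suffix_iff: "strict_suffix s w \<longleftrightarrow> (\<exists>z. w = z @ s \<and> z \<noteq> [])"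
  by (auto simp: strict_suffix_def suffix_def)

lemma lcp_append_same: "lcp (p @ xs) (p @ ys) = p @ lcp xs ys"
  by (induction p) auto

lemma lcp_eq_Nil_iff: "lcp xs ys = [] \<longleftrightarrow> xs = [] \<or> ys = [] \<or> hd xs \<noteq> hd ys"
  by (cases xs; cases ys) auto

lemma lcp_decomp: "\<exists>xs' ys'. xs = lcp xs ys @ xs' \<and> ys = lcp xs ys @ ys' \<and> lcp xs' ys' = []"
  by (induction xs ys rule: lcp.induct) (auto simp: lcp_eq_Nil_iff)

lemma lcs_append_same: "lcs (xs @ s) (ys @ s) = lcs xs ys @ s"
  by (simp add: lcs_def lcp_append_same)

lemma lcs_eq_Nil_iff: "lcs xs ys = [] \<longleftrightarrow> xs = [] \<or> ys = [] \<or> last xs \<noteq> last ys"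
  by (auto simp: lcs_def lcp_eq_Nil_iff hd_rev)

lemma lcs_decomp: "\<exists>xs' ys'. xs = xs' @ lcs xs ys \<and> ys = ys' @ lcs xs ys \<and> lcs xs' ys' = []"
proof -
  obtain xs' ys' where "rev xs = lcp (rev xs) (rev ys) @ xs'" "rev ys = lcp (rev xs) (rev ys) @ ys'"
    "lcp xs' ys' = []"
    using lcp_decomp by blast
  then have "rev (rev xs) = rev (lcp (rev xs) (rev ys) @ xs')"
    "rev (rev ys) = rev (lcp (rev xs) (rev ys) @ ys')" "lcs (rev xs') (rev ys') = []"
    by (simp_all add: lcs_def)
  then show ?thesis
    unfolding rev_rev_ident rev_append lcs_def[symmetric] by blast
qed

section \<open>Strongly left proper morphisms\<close>

lemma morph_simps [simp]:
  "morph \<sigma> [] = []" "morph \<sigma> (a # w) = \<sigma> a @ morph \<sigma> w"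
  "morph \<sigma> (w @ w') = morph \<sigma> w @ morph \<sigma> w'"
  by (simp_all add: morph_def)

lemma inj_morph_letters: "inj (morph \<sigma>) \<Longrightarrow> \<sigma> a = \<sigma> b \<Longrightarrow> a = b"
  using injD[of "morph \<sigma>" "[a]" "[b]"] by simp

lemma strongly_left_proper_ConsE:
  assumes "strongly_left_proper \<sigma> l"
  obtains t where "\<sigma> a = l # t" "l \<notin> set t"
proof -
  have "\<sigma> a \<noteq> []" "hd (\<sigma> a) = l" "count_list (\<sigma> a) l = 1"
    using assms unfolding strongly_left_proper_def by auto
  then show thesis
    using that by (cases "\<sigma> a") (auto simp: count_list_0_iff)
qed

lemma strongly_left_proper_notin_strict_suffix:
  assumes "strongly_left_proper \<sigma> l" "strict_suffix s (\<sigma> a)"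
  shows "l \<notin> set s"
proof -
  obtain t where t: "\<sigma> a = l # t" "l \<notin> set t"
    using assms(1) by (rule strongly_left_proper_ConsE)
  then have "suffix s t"
    using assms(2) by (auto simp: strict_suffix_def suffix_Cons)
  then show ?thesis
    using t(2) set_mono_suffix by blast
qed

lemma strongly_left_proper_prefixE:
  assumes "strongly_left_proper \<sigma> l" "prefix p (\<sigma> b)" "p \<noteq> []"
  obtains p' where "p = l # p'" "l \<notin> set p'"
proof -
  obtain t where t: "\<sigma> b = l # t" "l \<notin> set t"
    using assms(1) by (rule strongly_left_proper_ConsE)
  then obtain p' where "p = l # p'" "prefix p' t"
    using assms(2,3) by (cases p) auto
  then show thesis
    using t(2) that set_mono_prefix by blast
qed

lemma strongly_left_proper_suffix_image:
  assumes "strongly_left_proper \<sigma> l" "\<sigma> a = z @ \<sigma> b"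
  shows "z = []"
proof (rule ccontr)
  assume "z \<noteq> []"
  obtain ta where ta: "\<sigma> a = l # ta" "l \<notin> set ta"
    using assms(1) by (rule strongly_left_proper_ConsE)
  obtain tb where "\<sigma> b = l # tb"
    using assms(1) by (rule strongly_left_proper_ConsE)
  then have "l \<in> set ta"
    using assms(2) ta(1) \<open>z \<noteq> []\<close> by (cases z) auto
  then show False
    using ta(2) by contradiction
qed

lemma strongly_left_proper_hd_after_prefix:
  assumes "strongly_left_proper \<sigma> l" "\<sigma> b = p @ r" "p \<noteq> []" "r \<noteq> []"
  shows "hd r \<noteq> l"
proof -
  obtain t where t: "\<sigma> b = l # t" "l \<notin> set t"
    using assms(1) by (rule strongly_left_proper_ConsE)
  then have "hd r \<in> set t"
    using assms(2-4) by (cases p) auto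
  then show ?thesis
    using t(2) by blast
qed

lemma morph_Cons_marker:
  assumes "strongly_left_proper \<sigma> l"
  obtains t where "morph \<sigma> (a # w) = l # t @ morph \<sigma> w" "\<sigma> a = l # t" "l \<notin> set t"
proof -
  obtain t where t: "\<sigma> a = l # t" "l \<notin> set t"
    using assms by (rule strongly_left_proper_ConsE)
  show thesis
    by (rule that[OF _ t]) (simp add: t)
qed

lemma morph_nonempty_marker:
  assumes "strongly_left_proper \<sigma> l" "w \<noteq> []"
  obtains q where "morph \<sigma> w = l # q"
proof -
  obtain a w' where w: "w = a # w'"
    using assms(2) by (cases w) auto
  obtain t where "morph \<sigma> (a # w') = l # t @ morph \<sigma> w'"
    using assms(1) by (rule morph_Cons_marker)
  then show thesis
    using w by (intro that[of "t @ morph \<sigma> w'"]) simp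
qed

lemma morph_append_marker:
  assumes "strongly_left_proper \<sigma> l"
  obtains q' where "morph \<sigma> v @ l # q = l # q'"
proof (cases "v = []")
  case True
  then show thesis
    by (intro that[of q]) simp
next
  case False
  then obtain q'' where "morph \<sigma> v = l # q''"
    by (rule morph_nonempty_marker[OF assms])
  then show thesis
    by (intro that[of "q'' @ l # q"]) simp
qed

lemma hd_append_morph:
  assumes "strongly_left_proper \<sigma> l" "r @ morph \<sigma> w \<noteq> []"
  shows "hd (r @ morph \<sigma> w) = hd (r @ [l])"
proof (cases "r = []")
  case True
  then have "w \<noteq> []"
    using assms(2) by auto
  then obtain q where "morph \<sigma> w = l # q"
    by (rule morph_nonempty_marker[OF assms(1)])
  then show ?thesis
    using True by simp
qed simp

lemma morph_decode_prefix:
  assumes slp: "strongly_left_proper \<sigma> l" and inj: "inj (morph \<sigma>)"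
    and "morph \<sigma> w = morph \<sigma> v @ l # q"
  shows "\<exists>w'. w = v @ w' \<and> morph \<sigma> w' = l # q"
  using assms(3)
proof (induction v arbitrary: w)
  case (Cons a v)
  obtain q' where q': "morph \<sigma> v @ l # q = l # q'"
    by (rule morph_append_marker[OF slp])
  obtain c w2 where w: "w = c # w2"
    using Cons.prems by (cases w) auto
  obtain ta where ta: "\<sigma> a = l # ta" "l \<notin> set ta"
    using slp by (rule strongly_left_proper_ConsE)
  obtain tc where tc: "\<sigma> c = l # tc" "l \<notin> set tc"
    using slp by (rule strongly_left_proper_ConsE)
  have eq: "tc @ morph \<sigma> w2 = ta @ l # q'"
    using Cons.prems q' unfolding w by (simp add: ta tc)
  then have "w2 \<noteq> []"
    using tc(2) by auto
  then obtain q2 where w2: "morph \<sigma> w2 = l # q2"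
    by (rule morph_nonempty_marker[OF slp])
  have "tc = ta" "q2 = q'"
    using eq unfolding w2 by (simp_all add: append_Cons_eq_append_Cons_iff ta(2) tc(2))
  then have "c = a"
    using inj_morph_letters[OF inj, of c a] ta tc by simp
  moreover obtain w' where "w2 = v @ w'" "morph \<sigma> w' = l # q"
    using Cons.IH[of w2] w2 q' \<open>q2 = q'\<close> by auto
  ultimately show ?case using w by auto
qed simp

lemma morph_split:
  assumes "morph \<sigma> w = \<alpha> @ \<omega>" "\<alpha> \<noteq> []"
  shows "\<exists>w1 c w2 z \<gamma>. w = w1 @ c # w2 \<and> \<sigma> c = z @ \<gamma> \<and> z \<noteq> [] \<and>
           \<alpha> = morph \<sigma> w1 @ z \<and> \<omega> = \<gamma> @ morph \<sigma> w2"
  using assms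
proof (induction w arbitrary: \<alpha>)
  case (Cons c w)
  have "\<sigma> c @ morph \<sigma> w = \<alpha> @ \<omega>"
    using Cons.prems(1) by simp
  then obtain us where "\<sigma> c = \<alpha> @ us \<and> us @ morph \<sigma> w = \<omega> \<or>
      \<sigma> c @ us = \<alpha> \<and> morph \<sigma> w = us @ \<omega>"
    unfolding append_eq_append_conv2 by blast
  then show ?case
  proof (elim disjE conjE)
    assume "\<sigma> c = \<alpha> @ us" "us @ morph \<sigma> w = \<omega>"
    then show ?case
      using Cons.prems(2) by (intro exI[of _ "[]"]) auto
  next
    assume us: "\<sigma> c @ us = \<alpha>" "morph \<sigma> w = us @ \<omega>"
    show ?case
    proof (cases "us = []")
      case True
      then show ?thesis
        using us Cons.prems(2) by (intro exI[of _ "[]"]) auto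
    next
      case False
      then obtain w1 c' w2 z \<gamma> where "w = w1 @ c' # w2" "\<sigma> c' = z @ \<gamma>" "z \<noteq> []"
        "us = morph \<sigma> w1 @ z" "\<omega> = \<gamma> @ morph \<sigma> w2"
        using Cons.IH[OF us(2)] by blast
      then show ?thesis
        using us(1) by (intro exI[of _ "c # w1"]) auto
    qed
  qed
qed simp

lemma morph_marker_starts_block:
  assumes slp: "strongly_left_proper \<sigma> l" and s: "l \<notin> set s"
    and w: "morph \<sigma> w = \<alpha> @ s @ l # q" and "\<alpha> \<noteq> []"
  shows "\<exists>w1 a w' z. w = w1 @ a # w' \<and> \<sigma> a = z @ s \<and> z \<noteq> [] \<and>
           \<alpha> = morph \<sigma> w1 @ z \<and> morph \<sigma> w' = l # q"
proof -
  obtain w1 a w' z \<gamma> where split: "w = w1 @ a # w'" "\<sigma> a = z @ \<gamma>" "z \<noteq> []"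
    "\<alpha> = morph \<sigma> w1 @ z" and rest: "s @ l # q = \<gamma> @ morph \<sigma> w'"
    using morph_split[OF w \<open>\<alpha> \<noteq> []\<close>] by blast
  obtain t where t: "\<sigma> a = l # t" "l \<notin> set t"
    using slp by (rule strongly_left_proper_ConsE)
  have "l \<notin> set \<gamma>"
    using split(2,3) t by (auto simp: Cons_eq_append_conv)
  then have "w' \<noteq> []"
    using rest by auto
  then obtain q' where q': "morph \<sigma> w' = l # q'"
    by (rule morph_nonempty_marker[OF slp])
  have "s = \<gamma>" "q = q'"
    using rest unfolding q' by (simp_all add: append_Cons_eq_append_Cons_iff s \<open>l \<notin> set \<gamma>\<close>)
  then show ?thesis
    using split q' by blast
qed

lemma morph_marker_prefix_in_block:
  assumes slp: "strongly_left_proper \<sigma> l" and p': "l \<notin> set p'"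
    and w: "morph \<sigma> w = (l # p') @ \<beta>"
  shows "\<exists>b w2 r. w = b # w2 \<and> \<sigma> b = (l # p') @ r \<and> \<beta> = r @ morph \<sigma> w2"
proof -
  obtain b w2 where bw: "w = b # w2"
    using w by (cases w) auto
  obtain t where t: "\<sigma> b = l # t" "l \<notin> set t"
    using slp by (rule strongly_left_proper_ConsE)
  have "\<sigma> b @ morph \<sigma> w2 = (l # p') @ \<beta>"
    using w bw by simp
  then obtain us where "\<sigma> b = (l # p') @ us \<and> us @ morph \<sigma> w2 = \<beta> \<or>
      \<sigma> b @ us = l # p' \<and> morph \<sigma> w2 = us @ \<beta>"
    unfolding append_eq_append_conv2 by blast
  then show ?thesis
  proof (elim disjE conjE)
    assume "\<sigma> b = (l # p') @ us" "us @ morph \<sigma> w2 = \<beta>"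
    then show ?thesis
      using bw by blast
  next
    assume us: "\<sigma> b @ us = l # p'" "morph \<sigma> w2 = us @ \<beta>"
    have "us = []"
    proof (rule ccontr)
      assume "us \<noteq> []"
      then obtain q where "morph \<sigma> w2 = l # q"
        using us(2) morph_nonempty_marker[OF slp, of w2] by fastforce
      then have "us = l # tl us"
        using us(2) \<open>us \<noteq> []\<close> by (cases us) auto
      moreover have "p' = t @ us"
        using us(1) t(1) by simp
      ultimately show False
        using p' by (metis Un_iff list.set_intros(1) set_append)
    qed
    then show ?thesis
      using bw us by auto
  qed
qed

lemma morph_synchronize:
  assumes slp: "strongly_left_proper \<sigma> l" and inj: "inj (morph \<sigma>)"
    and s: "l \<notin> set s" and p': "l \<notin> set p'" and "\<alpha> \<noteq> []"
    and w: "morph \<sigma> w = \<alpha> @ s @ morph \<sigma> v @ (l # p') @ \<beta>"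
  shows "\<exists>w1 a b w2 z r. w = w1 @ a # v @ b # w2 \<and> \<sigma> a = z @ s \<and> z \<noteq> [] \<and>
           \<sigma> b = (l # p') @ r \<and> \<alpha> = morph \<sigma> w1 @ z \<and> \<beta> = r @ morph \<sigma> w2"
proof -
  obtain q where q: "morph \<sigma> v @ l # p' @ \<beta> = l # q"
    by (rule morph_append_marker[OF slp])
  obtain w1 a w' z where left: "w = w1 @ a # w'" "\<sigma> a = z @ s" "z \<noteq> []" "\<alpha> = morph \<sigma> w1 @ z"
    and "morph \<sigma> w' = morph \<sigma> v @ l # p' @ \<beta>"
    using morph_marker_starts_block[OF slp s _ \<open>\<alpha> \<noteq> []\<close>, of w q] w q by auto
  then obtain w'' where "w' = v @ w''" "morph \<sigma> w'' = (l # p') @ \<beta>"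
    using morph_decode_prefix[OF slp inj] by fastforce
  moreover obtain b w2 r where "w'' = b # w2" "\<sigma> b = (l # p') @ r" "\<beta> = r @ morph \<sigma> w2"
    using morph_marker_prefix_in_block[OF slp p' \<open>morph \<sigma> w'' = _\<close>] by blast
  ultimately show ?thesis
    using left by blast
qed

section \<open>Languages of shift spaces and of their images\<close>

lemma length_factor [simp]: "length (factor x i n) = n"
  by (simp add: factor_def)

lemma factor_add: "factor x i (m + n) = factor x i m @ factor x (i + int m) n"
  unfolding factor_def by (induction n) (auto simp: add.assoc)

lemma factor_Suc: "factor x i (Suc n) = factor x i n @ [x (i + int n)]"
  using factor_add[of x i n 1] by (simp add: factor_def)

lemma nth_factor [simp]: "j < n \<Longrightarrow> factor y t n ! j = y (t + int j)"
  by (simp add: factor_def)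

lemma factor_eq_iff: "factor y t (length w) = w \<longleftrightarrow> (\<forall>j<length w. y (t + int j) = w ! j)"
proof
  assume h: "factor y t (length w) = w"
  show "\<forall>j<length w. y (t + int j) = w ! j"
  proof (intro allI impI)
    fix j
    assume "j < length w"
    then have "y (t + int j) = factor y t (length w) ! j"
      by simp
    then show "y (t + int j) = w ! j"
      unfolding h .
  qed
next
  assume "\<forall>j<length w. y (t + int j) = w ! j"
  then show "factor y t (length w) = w"
    by (intro nth_equalityI) simp_all
qed

lemma lang_infix: "\<alpha> @ w @ \<beta> \<in> lang X \<Longrightarrow> w \<in> lang X"
proof -
  assume "\<alpha> @ w @ \<beta> \<in> lang X"
  then obtain x i n where x: "x \<in> X" "\<alpha> @ w @ \<beta> = factor x i n"
    unfolding lang_def by blast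
  have n: "n = length \<alpha> + (length w + length \<beta>)"
    using arg_cong[OF x(2), of length] by simp
  have "factor x i n = factor x i (length \<alpha>) @ factor x (i + int (length \<alpha>)) (length w) @
      factor x (i + int (length \<alpha>) + int (length w)) (length \<beta>)"
    unfolding n factor_add by (simp add: add.assoc)
  then have "w = factor x (i + int (length \<alpha>)) (length w)"
    using x(2) by (simp add: append_eq_append_conv)
  then show ?thesis
    using x(1) unfolding lang_def by blast
qed

lemma lang_extend_right: "w \<in> lang X \<Longrightarrow> \<exists>b. w @ [b] \<in> lang X"
proof -
  assume "w \<in> lang X"
  then obtain x i n where "x \<in> X" "w = factor x i n"
    unfolding lang_def by blast
  then have "x \<in> X" "w @ [x (i + int n)] = factor x i (Suc n)"
    by (simp_all add: factor_Suc)
  then show ?thesis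
    unfolding lang_def by blast
qed

definition cut_points :: "('a \<Rightarrow> 'b list) \<Rightarrow> (int \<Rightarrow> 'a) \<Rightarrow> (int \<Rightarrow> int) \<Rightarrow> (int \<Rightarrow> 'b) \<Rightarrow> bool" where
  "cut_points \<sigma> x c y \<longleftrightarrow> (\<forall>n. c (n + 1) = c n + int (length (\<sigma> (x n)))) \<and>
     (\<forall>n. factor y (c n) (length (\<sigma> (x n))) = \<sigma> (x n))"

lemma image_shift_iff:
  "y \<in> image_shift \<sigma> X \<longleftrightarrow>
     (\<exists>x\<in>X. \<exists>c. - int (length (\<sigma> (x 0))) < c 0 \<and> c 0 \<le> 0 \<and> cut_points \<sigma> x c y)"
  by (simp add: image_shift_def cut_points_def factor_eq_iff)

lemma strict_inc_add_le:
  fixes c :: "int \<Rightarrow> int"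
  assumes "\<And>n. c n < c (n + 1)"
  shows "c n + int k \<le> c (n + int k)"
proof (induction k)
  case (Suc k)
  have "c (n + int k) < c (n + int (Suc k))"
    using assms[of "n + int k"] by (simp add: ac_simps)
  then show ?case
    using Suc by simp
qed simp

lemma strict_inc_ex1_block:
  fixes c :: "int \<Rightarrow> int"
  assumes inc: "\<And>n. c n < c (n + 1)"
  shows "\<exists>!n. c n \<le> t \<and> t < c (n + 1)"
proof (rule ex_ex1I)
  define K where "K = nat (c 0 - t)"
  define n0 where "n0 = - int K"
  have "c n0 + int K \<le> c 0"
    using strict_inc_add_le[of c, OF inc, of n0 K] by (simp add: n0_def)
  moreover have "c 0 - t \<le> int K"
    by (simp add: K_def)
  ultimately have below: "c n0 \<le> t"
    by linarith
  define N where "N = nat (t - c n0) + 1"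
  have "c n0 + int N \<le> c (n0 + int N)"
    by (rule strict_inc_add_le[of c, OF inc])
  moreover have "int N = t - c n0 + 1"
    using below by (simp add: N_def)
  ultimately have above: "t < c (n0 + int N)"
    by linarith
  have "\<not> t < c (n0 + int 0)"
    using below by simp
  then have "\<exists>k<N. (\<forall>i\<le>k. \<not> t < c (n0 + int i)) \<and> t < c (n0 + int (k + 1))"
    using ex_least_nat_less[of "\<lambda>k. t < c (n0 + int k)" N] above by simp
  then obtain k where "\<not> t < c (n0 + int k)" "t < c (n0 + int (k + 1))"
    by auto
  then show "\<exists>n. c n \<le> t \<and> t < c (n + 1)"
    by (intro exI[of _ "n0 + int k"]) (simp add: ac_simps)
next
  fix n m
  assume n: "c n \<le> t \<and> t < c (n + 1)" and m: "c m \<le> t \<and> t < c (m + 1)"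
  have le: "c (i + 1) \<le> c j" if "i < j" for i j
    using strict_inc_add_le[of c, OF inc, of "i + 1" "nat (j - i - 1)"] that by simp
  show "n = m"
  proof (rule ccontr)
    assume "n \<noteq> m"
    then consider "n < m" | "m < n"
      by linarith
    then show False
    proof cases
      case 1
      then show False using le[of n m] n m by linarith
    next
      case 2
      then show False using le[of m n] n m by linarith
    qed
  qed
qed

lemma cut_points_add:
  assumes "cut_points \<sigma> x c y"
  shows "c (n + int k) = c n + int (length (morph \<sigma> (factor x n k)))"
proof (induction k)
  case (Suc k)
  have "c (n + int k + 1) = c (n + int k) + int (length (\<sigma> (x (n + int k))))"
    using assms unfolding cut_points_def by blast
  then show ?case
    using Suc by (simp add: factor_Suc ac_simps)
qed (simp add: factor_def)

lemma cut_points_factor: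
  assumes cp: "cut_points \<sigma> x c y"
  shows "factor y (c n) (length (morph \<sigma> (factor x n k))) = morph \<sigma> (factor x n k)"
proof (induction k)
  case (Suc k)
  let ?M = "morph \<sigma> (factor x n k)" and ?b = "\<sigma> (x (n + int k))"
  have "factor y (c (n + int k)) (length ?b) = ?b"
    using cp unfolding cut_points_def by blast
  then have "factor y (c n + int (length ?M)) (length ?b) = ?b"
    unfolding cut_points_add[OF cp] .
  then show ?case
    using Suc by (simp add: factor_Suc factor_add)
qed (simp add: factor_def)

lemma cut_points_strict_inc:
  assumes "strongly_left_proper \<sigma> l" "cut_points \<sigma> x c y"
  shows "c n < c (n + 1)"
proof -
  obtain t where "\<sigma> (x n) = l # t"
    using assms(1) by (rule strongly_left_proper_ConsE)
  then show ?thesis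
    using assms(2) unfolding cut_points_def by simp
qed

lemma int_recurrence_exists:
  fixes f :: "int \<Rightarrow> int"
  shows "\<exists>c. c 0 = 0 \<and> (\<forall>n. c (n + 1) = c n + f n)"
proof -
  define c where "c n = (if 0 \<le> n then \<Sum>k\<in>{0..<n}. f k else - (\<Sum>k\<in>{n..<0}. f k))" for n
  have "c (n + 1) = c n + f n" for n
  proof -
    consider "0 \<le> n" | "n = -1" | "n < -1"
      by linarith
    then show ?thesis
    proof cases
      case 1
      then have "{0..<n + 1} = insert n {0..<n}"
        by auto
      then show ?thesis
        using 1 unfolding c_def by simp
    next
      case 2
      moreover have "{-1..<0 :: int} = {-1}"
        by auto
      ultimately show ?thesis
        unfolding c_def by simp
    next
      case 3
      then have "{n..<0} = insert n {n + 1..<0}"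
        by auto
      then show ?thesis
        using 3 unfolding c_def by simp
    qed
  qed
  moreover have "c 0 = 0"
    by (simp add: c_def)
  ultimately show ?thesis
    by blast
qed

lemma cut_points_exist:
  assumes slp: "strongly_left_proper \<sigma> l"
  shows "\<exists>c y. c 0 = 0 \<and> cut_points \<sigma> x c y"
proof -
  obtain c where c0: "c 0 = 0" and rec: "\<And>n. c (n + 1) = c n + int (length (\<sigma> (x n)))"
    using int_recurrence_exists[of "\<lambda>n. int (length (\<sigma> (x n)))"] by blast
  have inc: "c n < c (n + 1)" for n
  proof -
    obtain t where "\<sigma> (x n) = l # t"
      using slp by (rule strongly_left_proper_ConsE)
    then show ?thesis
      using rec[of n] by simp
  qed
  define blk where "blk t = (THE n. c n \<le> t \<and> t < c (n + 1))" for t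
  define y where "y t = \<sigma> (x (blk t)) ! nat (t - c (blk t))" for t
  have "factor y (c n) (length (\<sigma> (x n))) = \<sigma> (x n)" for n
    unfolding factor_eq_iff
  proof (intro allI impI)
    fix j
    assume "j < length (\<sigma> (x n))"
    then have "c n \<le> c n + int j \<and> c n + int j < c (n + 1)"
      using rec[of n] by simp
    then have "blk (c n + int j) = n"
      unfolding blk_def by (rule the1_equality[OF strict_inc_ex1_block[of c, OF inc]])
    then show "y (c n + int j) = \<sigma> (x n) ! j"
      by (simp add: y_def)
  qed
  then show ?thesis
    using c0 rec unfolding cut_points_def by blast
qed

lemma morph_mem_lang_image_shift:
  assumes slp: "strongly_left_proper \<sigma> l" and "w \<in> lang X"
  shows "morph \<sigma> w \<in> lang (image_shift \<sigma> X)"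
proof -
  obtain x i n where x: "x \<in> X" "w = factor x i n"
    using assms(2) unfolding lang_def by blast
  obtain c y where cy: "c 0 = 0" "cut_points \<sigma> x c y"
    using cut_points_exist[OF slp] by blast
  obtain t where "\<sigma> (x 0) = l # t"
    using slp by (rule strongly_left_proper_ConsE)
  then have "- int (length (\<sigma> (x 0))) < c 0"
    using cy(1) by simp
  then have "y \<in> image_shift \<sigma> X"
    unfolding image_shift_iff
    by (intro bexI[of _ x] exI[of _ c] conjI) (simp_all add: x(1) cy)
  moreover have "morph \<sigma> w = factor y (c i) (length (morph \<sigma> w))"
    using cut_points_factor[OF cy(2), of i n] x(2) by simp
  ultimately show ?thesis
    unfolding lang_def by blast
qed

lemma lang_image_shift_infix_morph:
  assumes slp: "strongly_left_proper \<sigma> l" and "u \<in> lang (image_shift \<sigma> X)"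
  shows "\<exists>w\<in>lang X. \<exists>\<alpha> \<beta>. \<alpha> \<noteq> [] \<and> morph \<sigma> w = \<alpha> @ u @ \<beta>"
proof -
  obtain y t where y: "y \<in> image_shift \<sigma> X" "u = factor y t (length u)"
    using assms(2) unfolding lang_def by fastforce
  obtain x c where x: "x \<in> X" and cp: "cut_points \<sigma> x c y"
    using y(1) unfolding image_shift_iff by blast
  note inc = cut_points_strict_inc[OF slp cp]
  obtain m where "c m \<le> t"
    using strict_inc_ex1_block[of c t, OF inc] by blast
  define n where "n = m - 1"
  have n: "c n < t"
    using inc[of n] \<open>c m \<le> t\<close> unfolding n_def by simp
  define K where "K = nat (t + int (length u) - c n)"
  define M where "M = morph \<sigma> (factor x n K)"
  have "c n + int K \<le> c (n + int K)"
    by (rule strict_inc_add_le[of c, OF inc])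
  then have len: "t + int (length u) \<le> c n + int (length M)"
    using cut_points_add[OF cp, of n K] unfolding K_def M_def by linarith
  define a where "a = nat (t - c n)"
  define b where "b = length M - a - length u"
  have "length M = a + (length u + b)" "c n + int a = t"
    using n len unfolding a_def b_def by linarith+
  then have "M = factor y (c n) (a + (length u + b))"
    using cut_points_factor[OF cp, of n K] unfolding M_def by simp
  also have "\<dots> = factor y (c n) a @ factor y (c n + int a) (length u) @
      factor y (c n + int a + int (length u)) b"
    by (simp add: factor_add add.assoc)
  also have "\<dots> = factor y (c n) a @ u @ factor y (t + int (length u)) b"
    using \<open>c n + int a = t\<close> y(2) by simp
  finally have "M = factor y (c n) a @ u @ factor y (t + int (length u)) b" .
  moreover have "factor y (c n) a \<noteq> []"
    using length_greater_0_conv[of "factor y (c n) a"] n unfolding a_def by simp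
  moreover have "factor x n K \<in> lang X"
    using x unfolding lang_def by blast
  ultimately show ?thesis
    unfolding M_def by blast
qed

section \<open>Extensions of extended images\<close>

definition letter_before :: "'b list \<Rightarrow> 'b list \<Rightarrow> 'b" where
  "letter_before s w = last (take (length w - length s) w)"

(* The letter after the prefix p of sigma b in sigma(b b'): since sigma b' starts with l, it is l
   when p = sigma b. *)
definition letter_after :: "'b \<Rightarrow> 'b list \<Rightarrow> 'b list \<Rightarrow> 'b" where
  "letter_after l p w = hd (drop (length p) w @ [l])"

lemma letter_before_append [simp]: "letter_before s (z @ s) = last z"
  by (simp add: letter_before_def)

lemma letter_after_append [simp]: "letter_after l p (p @ r) = hd (r @ [l])"
  by (simp add: letter_after_def)

definition compatible_extensions ::
  "('a \<Rightarrow> 'b list) \<Rightarrow> (int \<Rightarrow> 'a) set \<Rightarrow> 'b list \<Rightarrow> 'a list \<Rightarrow> 'b list \<Rightarrow> ('a \<times> 'a) set" where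
  "compatible_extensions \<sigma> X s v p =
     {(a, b) \<in> ext_both X v. strict_suffix s (\<sigma> a) \<and> prefix p (\<sigma> b)}"

lemma compatible_extensions_iff:
  "(a, b) \<in> compatible_extensions \<sigma> X s v p \<longleftrightarrow>
     (a, b) \<in> ext_both X v \<and> (\<exists>z. \<sigma> a = z @ s \<and> z \<noteq> []) \<and> (\<exists>r. \<sigma> b = p @ r)"
  by (auto simp: compatible_extensions_def strict_suffix_iff prefix_def)

lemma extended_context_mem_lang:
  assumes slp: "strongly_left_proper \<sigma> l" and ab: "(a, b) \<in> ext_both X v"
    and a: "\<sigma> a = z @ s" "z \<noteq> []" and b: "\<sigma> b = p @ r"
  shows "last z # (s @ morph \<sigma> v @ p) @ [hd (r @ [l])] \<in> lang (image_shift \<sigma> X)"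
proof -
  obtain b' where "(a # v @ [b]) @ [b'] \<in> lang X"
    using ab lang_extend_right unfolding ext_both_def by blast
  then have "a # v @ [b, b'] \<in> lang X"
    by simp
  then have "morph \<sigma> (a # v @ [b, b']) \<in> lang (image_shift \<sigma> X)"
    by (rule morph_mem_lang_image_shift[OF slp])
  moreover obtain t where "\<sigma> b' = l # t"
    using slp by (rule strongly_left_proper_ConsE)
  moreover have "r @ l # t = hd (r @ [l]) # tl (r @ [l]) @ t"
    by (cases r) auto
  moreover obtain z' c where z: "z = z' @ [c]"
    using a(2) by (cases z rule: rev_cases) auto
  ultimately have "z' @ (c # (s @ morph \<sigma> v @ p) @ [hd (r @ [l])]) @ tl (r @ [l]) @ t
      \<in> lang (image_shift \<sigma> X)"
    using a b by simp
  then show ?thesis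
    unfolding z last_snoc by (rule lang_infix)
qed

lemma ext_left_extended_image:
  assumes slp: "strongly_left_proper \<sigma> l" and inj: "inj (morph \<sigma>)"
    and s: "l \<notin> set s" and p: "p = l # p'" "l \<notin> set p'"
  shows "ext_left (image_shift \<sigma> X) (s @ morph \<sigma> v @ p) =
    (\<lambda>(a, b). letter_before s (\<sigma> a)) ` compatible_extensions \<sigma> X s v p"
proof (intro equalityI subsetI)
  fix c
  assume "c \<in> ext_left (image_shift \<sigma> X) (s @ morph \<sigma> v @ p)"
  then obtain w \<alpha> \<beta> where w: "w \<in> lang X" "morph \<sigma> w = (\<alpha> @ [c]) @ s @ morph \<sigma> v @ (l # p') @ \<beta>"
    using lang_image_shift_infix_morph[OF slp] unfolding ext_left_def p by fastforce
  then obtain w1 a b w2 z r where sync: "w = w1 @ a # v @ b # w2" "\<sigma> a = z @ s" "z \<noteq> []"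
    "\<sigma> b = p @ r" "\<alpha> @ [c] = morph \<sigma> w1 @ z"
    using morph_synchronize[OF slp inj s p(2) _ w(2)] unfolding p(1)[symmetric] by blast
  have "(a, b) \<in> ext_both X v"
    using lang_infix[of w1 "a # v @ [b]" w2] w(1) sync(1) unfolding ext_both_def by simp
  then have "(a, b) \<in> compatible_extensions \<sigma> X s v p"
    using sync(2-4) unfolding compatible_extensions_iff by blast
  moreover have "c = letter_before s (\<sigma> a)"
    using sync(2,3,5) by (metis last_appendR last_snoc letter_before_append)
  ultimately show "c \<in> (\<lambda>(a, b). letter_before s (\<sigma> a)) ` compatible_extensions \<sigma> X s v p"
    by (intro rev_image_eqI[of "(a, b)"]) simp_all
next
  fix c
  assume "c \<in> (\<lambda>(a, b). letter_before s (\<sigma> a)) ` compatible_extensions \<sigma> X s v p"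
  then obtain a b z r where "(a, b) \<in> ext_both X v" "\<sigma> a = z @ s" "z \<noteq> []" "\<sigma> b = p @ r"
    "c = letter_before s (\<sigma> a)"
    by (auto simp: compatible_extensions_iff)
  then have "[] @ (c # s @ morph \<sigma> v @ p) @ [hd (r @ [l])] \<in> lang (image_shift \<sigma> X)"
    using extended_context_mem_lang[OF slp] by simp
  then show "c \<in> ext_left (image_shift \<sigma> X) (s @ morph \<sigma> v @ p)"
    unfolding ext_left_def by (blast dest: lang_infix)
qed

lemma ext_right_extended_image:
  assumes slp: "strongly_left_proper \<sigma> l" and inj: "inj (morph \<sigma>)"
    and s: "l \<notin> set s" and p: "p = l # p'" "l \<notin> set p'"
  shows "ext_right (image_shift \<sigma> X) (s @ morph \<sigma> v @ p) =
    (\<lambda>(a, b). letter_after l p (\<sigma> b)) ` compatible_extensions \<sigma> X s v p"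
proof (intro equalityI subsetI)
  fix d
  assume "d \<in> ext_right (image_shift \<sigma> X) (s @ morph \<sigma> v @ p)"
  then obtain w \<alpha> \<beta> where w: "w \<in> lang X" "\<alpha> \<noteq> []"
    "morph \<sigma> w = \<alpha> @ s @ morph \<sigma> v @ (l # p') @ (d # \<beta>)"
    using lang_image_shift_infix_morph[OF slp] unfolding ext_right_def p by fastforce
  then obtain w1 a b w2 z r where sync: "w = w1 @ a # v @ b # w2" "\<sigma> a = z @ s" "z \<noteq> []"
    "\<sigma> b = p @ r" "d # \<beta> = r @ morph \<sigma> w2"
    using morph_synchronize[OF slp inj s p(2) w(2,3)] unfolding p(1)[symmetric] by blast
  have "(a, b) \<in> ext_both X v"
    using lang_infix[of w1 "a # v @ [b]" w2] w(1) sync(1) unfolding ext_both_def by simp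
  moreover have "d = letter_after l p (\<sigma> b)"
    using hd_append_morph[OF slp, of r w2] sync(4) sync(5)[symmetric] by simp
  moreover have "(a, b) \<in> compatible_extensions \<sigma> X s v p"
    using calculation(1) sync(2-4) unfolding compatible_extensions_iff by blast
  ultimately show "d \<in> (\<lambda>(a, b). letter_after l p (\<sigma> b)) ` compatible_extensions \<sigma> X s v p"
    by (intro rev_image_eqI[of "(a, b)"]) simp_all
next
  fix d
  assume "d \<in> (\<lambda>(a, b). letter_after l p (\<sigma> b)) ` compatible_extensions \<sigma> X s v p"
  then obtain a b z r where "(a, b) \<in> ext_both X v" "\<sigma> a = z @ s" "z \<noteq> []" "\<sigma> b = p @ r"
    "d = letter_after l p (\<sigma> b)"
    by (auto simp: compatible_extensions_iff)
  then have "[last z] @ ((s @ morph \<sigma> v @ p) @ [d]) @ [] \<in> lang (image_shift \<sigma> X)"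
    using extended_context_mem_lang[OF slp] by simp
  then show "d \<in> ext_right (image_shift \<sigma> X) (s @ morph \<sigma> v @ p)"
    unfolding ext_right_def by (blast dest: lang_infix)
qed

lemma two_le_card_iff:
  assumes "finite S"
  shows "2 \<le> card S \<longleftrightarrow> (\<exists>a\<in>S. \<exists>b\<in>S. a \<noteq> b)"
proof
  assume "2 \<le> card S"
  then obtain a B where "S = insert a B" "a \<notin> B" "Suc 0 \<le> card B"
    unfolding numeral_2_eq_2 card_le_Suc_iff by blast
  moreover from \<open>Suc 0 \<le> card B\<close> obtain b where "b \<in> B"
    by fastforce
  ultimately have "a \<in> S" "b \<in> S" "a \<noteq> b"
    by auto
  then show "\<exists>a\<in>S. \<exists>b\<in>S. a \<noteq> b"
    by blast
next
  assume "\<exists>a\<in>S. \<exists>b\<in>S. a \<noteq> b"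
  then obtain a b where "a \<in> S" "b \<in> S" "a \<noteq> b"
    by blast
  then have "card {a, b} \<le> card S"
    by (intro card_mono assms) auto
  then show "2 \<le> card S"
    using \<open>a \<noteq> b\<close> by simp
qed

lemma exists_pair_both_differ:
  assumes "\<exists>e1\<in>S. \<exists>e2\<in>S. f e1 \<noteq> f e2" and "\<exists>e3\<in>S. \<exists>e4\<in>S. g e3 \<noteq> g e4"
  shows "\<exists>e\<in>S. \<exists>e'\<in>S. f e \<noteq> f e' \<and> g e \<noteq> g e'"
proof (rule ccontr)
  assume "\<not> ?thesis"
  then have same: "f e = f e' \<or> g e = g e'" if "e \<in> S" "e' \<in> S" for e e'
    using that by blast
  obtain e1 e2 where e12: "e1 \<in> S" "e2 \<in> S" "f e1 \<noteq> f e2"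
    using assms(1) by blast
  obtain e3 e4 where e34: "e3 \<in> S" "e4 \<in> S" "g e3 \<noteq> g e4"
    using assms(2) by blast
  have "g e1 = g e2"
    using same[OF e12(1,2)] e12(3) by blast
  then obtain e where "e \<in> S" "g e \<noteq> g e1" "g e \<noteq> g e2"
    using e34 by metis
  then show False
    using same[of e e1] same[of e e2] e12 by auto
qed

lemma sfx_eqI:
  assumes "\<sigma> a1 = z1 @ s" "\<sigma> a2 = z2 @ s" "z1 \<noteq> []" "z2 \<noteq> []" "last z1 \<noteq> last z2"
  shows "sfx \<sigma> a1 a2 = s"
  using assms by (simp add: sfx_def lcs_append_same lcs_eq_Nil_iff)

lemma pfx_eqI:
  assumes "\<sigma> b1 = p @ r1" "\<sigma> b2 = p @ r2" "hd (r1 @ [l]) \<noteq> hd (r2 @ [l])"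
  shows "pfx \<sigma> b1 b2 = p"
proof -
  have "lcp r1 r2 = []"
    using assms(3) unfolding lcp_eq_Nil_iff by (auto simp: hd_append)
  then show ?thesis
    using assms(1,2) by (simp add: pfx_def lcp_append_same)
qed

lemma sfx_strict_suffixes:
  assumes slp: "strongly_left_proper \<sigma> l" and inj: "inj (morph \<sigma>)" and "a1 \<noteq> a2"
  obtains z1 z2 where "\<sigma> a1 = z1 @ sfx \<sigma> a1 a2" "\<sigma> a2 = z2 @ sfx \<sigma> a1 a2"
    "z1 \<noteq> []" "z2 \<noteq> []" "last z1 \<noteq> last z2"
proof -
  obtain z1 z2 where z: "\<sigma> a1 = z1 @ sfx \<sigma> a1 a2" "\<sigma> a2 = z2 @ sfx \<sigma> a1 a2" "lcs z1 z2 = []"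
    using lcs_decomp[of "\<sigma> a1" "\<sigma> a2"] unfolding sfx_def by blast
  have "z1 \<noteq> [] \<and> z2 \<noteq> []"
  proof (rule ccontr)
    assume "\<not> (z1 \<noteq> [] \<and> z2 \<noteq> [])"
    then have "\<sigma> a2 = z2 @ \<sigma> a1 \<or> \<sigma> a1 = z1 @ \<sigma> a2"
      using z by auto
    then have "\<sigma> a1 = \<sigma> a2"
      using strongly_left_proper_suffix_image[OF slp] by auto
    then show False
      using inj_morph_letters[OF inj, of a1 a2] \<open>a1 \<noteq> a2\<close> by simp
  qed
  then have "last z1 \<noteq> last z2"
    using z(3) unfolding lcs_eq_Nil_iff by simp
  then show thesis
    using that z(1,2) \<open>z1 \<noteq> [] \<and> z2 \<noteq> []\<close> by blast
qed

lemma pfx_nonempty_prefixes: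
  assumes slp: "strongly_left_proper \<sigma> l" and inj: "inj (morph \<sigma>)" and "b1 \<noteq> b2"
  obtains r1 r2 where "pfx \<sigma> b1 b2 \<noteq> []" "\<sigma> b1 = pfx \<sigma> b1 b2 @ r1" "\<sigma> b2 = pfx \<sigma> b1 b2 @ r2"
    "hd (r1 @ [l]) \<noteq> hd (r2 @ [l])"
proof -
  let ?p = "pfx \<sigma> b1 b2"
  obtain r1 r2 where r: "\<sigma> b1 = ?p @ r1" "\<sigma> b2 = ?p @ r2" "lcp r1 r2 = []"
    using lcp_decomp[of "\<sigma> b1" "\<sigma> b2"] unfolding pfx_def by blast
  obtain t1 where "\<sigma> b1 = l # t1"
    using slp by (rule strongly_left_proper_ConsE)
  moreover obtain t2 where "\<sigma> b2 = l # t2"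
    using slp by (rule strongly_left_proper_ConsE)
  ultimately have "?p \<noteq> []"
    unfolding pfx_def by simp
  have "r1 \<noteq> [] \<or> r2 \<noteq> []"
    using r inj_morph_letters[OF inj, of b1 b2] \<open>b1 \<noteq> b2\<close> by auto
  then have "hd (r1 @ [l]) \<noteq> hd (r2 @ [l])"
    using r strongly_left_proper_hd_after_prefix[OF slp r(1) \<open>?p \<noteq> []\<close>]
      strongly_left_proper_hd_after_prefix[OF slp r(2) \<open>?p \<noteq> []\<close>]
    unfolding lcp_eq_Nil_iff by (auto simp: hd_append)
  then show thesis
    using that r(1,2) \<open>?p \<noteq> []\<close> by blast
qed

lemma bispecial_extended_image_imp_ext_pairs:
  fixes \<sigma> :: "'a \<Rightarrow> 'b::finite list"
  assumes slp: "strongly_left_proper \<sigma> l" and inj: "inj (morph \<sigma>)"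
    and bs: "bispecial (image_shift \<sigma> X) u" and ei: "extended_image \<sigma> X u v"
  shows "\<exists>a1 b1 a2 b2. (a1, b1) \<in> ext_both X v \<and> (a2, b2) \<in> ext_both X v \<and>
           a1 \<noteq> a2 \<and> b1 \<noteq> b2 \<and> u = sfx \<sigma> a1 a2 @ morph \<sigma> v @ pfx \<sigma> b1 b2"
proof -
  obtain s p a0 b0 where "strict_suffix s (\<sigma> a0)" "p \<noteq> []" "prefix p (\<sigma> b0)"
    and u: "u = s @ morph \<sigma> v @ p"
    using ei unfolding extended_image_def by blast
  then obtain p' where s: "l \<notin> set s" and p: "p = l # p'" "l \<notin> set p'"
    using strongly_left_proper_notin_strict_suffix[OF slp] strongly_left_proper_prefixE[OF slp] by metis
  define E where "E = compatible_extensions \<sigma> X s v p"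
  define f :: "'a \<times> 'a \<Rightarrow> 'b" where "f e = letter_before s (\<sigma> (fst e))" for e
  define g :: "'a \<times> 'a \<Rightarrow> 'b" where "g e = letter_after l p (\<sigma> (snd e))" for e
  have "2 \<le> card (f ` E)" "2 \<le> card (g ` E)"
    using bs ext_left_extended_image[OF slp inj s p] ext_right_extended_image[OF slp inj s p]
    unfolding bispecial_def u E_def f_def g_def by (simp_all add: case_prod_beta')
  then have "\<exists>e\<in>E. \<exists>e'\<in>E. f e \<noteq> f e' \<and> g e \<noteq> g e'"
    by (intro exists_pair_both_differ) (auto simp: two_le_card_iff)
  then obtain a1 b1 a2 b2 where e: "(a1, b1) \<in> E" "(a2, b2) \<in> E"
    and fg: "f (a1, b1) \<noteq> f (a2, b2)" "g (a1, b1) \<noteq> g (a2, b2)"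
    by auto
  obtain z1 z2 r1 r2 where z: "\<sigma> a1 = z1 @ s" "\<sigma> a2 = z2 @ s" "z1 \<noteq> []" "z2 \<noteq> []"
    and r: "\<sigma> b1 = p @ r1" "\<sigma> b2 = p @ r2"
    using e unfolding E_def compatible_extensions_iff by blast
  then have "last z1 \<noteq> last z2" "hd (r1 @ [l]) \<noteq> hd (r2 @ [l])"
    using fg unfolding f_def g_def by simp_all
  then have "sfx \<sigma> a1 a2 = s" "pfx \<sigma> b1 b2 = p"
    using sfx_eqI[of \<sigma>, OF z] pfx_eqI[of \<sigma>, OF r] by blast+
  moreover have "a1 \<noteq> a2" "b1 \<noteq> b2"
    using fg unfolding f_def g_def by auto
  ultimately show ?thesis
    using e u unfolding E_def compatible_extensions_def by blast
qed

lemma ext_pairs_imp_bispecial_extended_image: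
  fixes \<sigma> :: "'a \<Rightarrow> 'b::finite list"
  assumes slp: "strongly_left_proper \<sigma> l" and inj: "inj (morph \<sigma>)"
    and e1: "(a1, b1) \<in> ext_both X v" and e2: "(a2, b2) \<in> ext_both X v"
    and "a1 \<noteq> a2" "b1 \<noteq> b2"
  defines "u \<equiv> sfx \<sigma> a1 a2 @ morph \<sigma> v @ pfx \<sigma> b1 b2"
  shows "bispecial (image_shift \<sigma> X) u \<and> extended_image \<sigma> X u v"
proof -
  define s where "s = sfx \<sigma> a1 a2"
  define p where "p = pfx \<sigma> b1 b2"
  obtain z1 z2 where z: "\<sigma> a1 = z1 @ s" "\<sigma> a2 = z2 @ s" "z1 \<noteq> []" "z2 \<noteq> []"
    and f_ne: "last z1 \<noteq> last z2"
    unfolding s_def using sfx_strict_suffixes[OF slp inj \<open>a1 \<noteq> a2\<close>] .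
  obtain r1 r2 where "p \<noteq> []" and r: "\<sigma> b1 = p @ r1" "\<sigma> b2 = p @ r2"
    and g_ne: "hd (r1 @ [l]) \<noteq> hd (r2 @ [l])"
    unfolding p_def using pfx_nonempty_prefixes[OF slp inj \<open>b1 \<noteq> b2\<close>] .
  have E: "(a1, b1) \<in> compatible_extensions \<sigma> X s v p" "(a2, b2) \<in> compatible_extensions \<sigma> X s v p"
    using e1 e2 z r unfolding compatible_extensions_iff by blast+
  have s: "l \<notin> set s"
    using strongly_left_proper_notin_strict_suffix[OF slp] E(1) unfolding compatible_extensions_def by blast
  have "prefix p (\<sigma> b1)"
    using r(1) by simp
  then obtain p' where p: "p = l # p'" "l \<notin> set p'"
    using strongly_left_proper_prefixE[OF slp _ \<open>p \<noteq> []\<close>] by blast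
  have u: "u = s @ morph \<sigma> v @ p"
    unfolding u_def s_def p_def ..
  have "last z1 \<in> ext_left (image_shift \<sigma> X) u" "last z2 \<in> ext_left (image_shift \<sigma> X) u"
    unfolding u ext_left_extended_image[OF slp inj s p]
    using image_eqI[OF _ E(1), of _ "\<lambda>(a, b). letter_before s (\<sigma> a)"]
      image_eqI[OF _ E(2), of _ "\<lambda>(a, b). letter_before s (\<sigma> a)"] z by simp_all
  moreover have "hd (r1 @ [l]) \<in> ext_right (image_shift \<sigma> X) u"
    "hd (r2 @ [l]) \<in> ext_right (image_shift \<sigma> X) u"
    unfolding u ext_right_extended_image[OF slp inj s p]
    using image_eqI[OF _ E(1), of _ "\<lambda>(a, b). letter_after l p (\<sigma> b)"]
      image_eqI[OF _ E(2), of _ "\<lambda>(a, b). letter_after l p (\<sigma> b)"] r by simp_all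
  moreover have "u \<in> lang (image_shift \<sigma> X)"
    using calculation(1) lang_infix[of "[last z1]" u "[]"] unfolding ext_left_def by simp
  ultimately have "bispecial (image_shift \<sigma> X) u"
    unfolding bispecial_def using f_ne g_ne by (auto simp: two_le_card_iff)
  moreover have "v \<in> lang X"
    using e1 lang_infix[of "[a1]" v "[b1]"] unfolding ext_both_def by simp
  then have "extended_image \<sigma> X u v"
    using E(1) \<open>p \<noteq> []\<close> unfolding extended_image_def compatible_extensions_def u by blast
  ultimately show ?thesis ..
qed

lemma ext_pairs_imp_bispecial:
  fixes X :: "(int \<Rightarrow> 'a::finite) set"
  assumes "(a1, b1) \<in> ext_both X v" "(a2, b2) \<in> ext_both X v" "a1 \<noteq> a2" "b1 \<noteq> b2"
  shows "bispecial X v"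
proof -
  have "a1 \<in> ext_left X v" "a2 \<in> ext_left X v" "b1 \<in> ext_right X v" "b2 \<in> ext_right X v"
    using assms(1,2) lang_infix[of "[]" "_ # v" "[_]"] lang_infix[of "[_]" "v @ [_]" "[]"]
    unfolding ext_both_def ext_left_def ext_right_def by auto
  moreover have "v \<in> lang X"
    using assms(1) lang_infix[of "[a1]" v "[b1]"] unfolding ext_both_def by simp
  ultimately show ?thesis
    unfolding bispecial_def using assms(3,4) by (auto simp: two_le_card_iff)
qed

theorem corollary4p2:
  fixes X :: "(int \<Rightarrow> 'a::finite) set" and \<sigma> :: "'a \<Rightarrow> 'b::finite list"
    and l :: 'b and v :: "'a list"
  assumes "shift_space X"
    and "inj (morph \<sigma>)"
    and "strongly_left_proper \<sigma> l"
    and "v \<in> lang X"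
  shows "(\<forall>u. (bispecial (image_shift \<sigma> X) u \<and> extended_image \<sigma> X u v) \<longleftrightarrow>
            (\<exists>a1 b1 a2 b2. (a1, b1) \<in> ext_both X v \<and> (a2, b2) \<in> ext_both X v \<and>
               a1 \<noteq> a2 \<and> b1 \<noteq> b2 \<and> u = sfx \<sigma> a1 a2 @ morph \<sigma> v @ pfx \<sigma> b1 b2))
      \<and> (\<forall>u. bispecial (image_shift \<sigma> X) u \<and> extended_image \<sigma> X u v \<longrightarrow> bispecial X v)"
proof (intro conjI allI impI)
  fix u
  show "bispecial (image_shift \<sigma> X) u \<and> extended_image \<sigma> X u v \<longleftrightarrow>
      (\<exists>a1 b1 a2 b2. (a1, b1) \<in> ext_both X v \<and> (a2, b2) \<in> ext_both X v \<and>
         a1 \<noteq> a2 \<and> b1 \<noteq> b2 \<and> u = sfx \<sigma> a1 a2 @ morph \<sigma> v @ pfx \<sigma> b1 b2)"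
    using bispecial_extended_image_imp_ext_pairs[OF assms(3,2)]
      ext_pairs_imp_bispecial_extended_image[OF assms(3,2)] by blast
next
  fix u
  assume "bispecial (image_shift \<sigma> X) u \<and> extended_image \<sigma> X u v"
  then show "bispecial X v"
    using bispecial_extended_image_imp_ext_pairs[OF assms(3,2)] ext_pairs_imp_bispecial by blast
qed

end
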